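(* Let $N\ge3$ be an integer, $(N+2)/(N-2)<p<p_{JL}$ and $\lambda>0$. For $\alpha>0$ let $u(r;\alpha)$ be the unique solution of \[ u''+\frac{N-1}{r}u'+\lambda u+|u|^{p-1}u=0\ (r>0),\qquad u(0)=\alpha,\ u'(0)=0. \] Then for each $\alpha>0$, $u(\cdot;\alpha)$ has a zero in $(0,\infty)$.
   Context: The Joseph–Lundgren exponent is $p_{JL}=1+\frac{4}{N-4-2\sqrt{N-1}}$ for $N\ge11$ and $p_{JL}=\infty$ for $3\le N\le10$. *)

theory Defs
  imports "HOL-Analysis.Analysis" "HOL-Library.Extended_Real"
begin

definition p_JL :: "nat \<Rightarrow> ereal" where
  "p_JL N = (if N \<ge> 11
             then ereal (1 + 4 / (real N - 4 - 2 * sqrt (real N - 1)))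
             else \<infinity>)"

end

theory Submission
  imports Defs "HOL-Real_Asymp.Real_Asymp"
begin

text \<open>If \<open>u\<close> stayed positive, then \<open>v = r\<^sup>m u\<close> with \<open>m = (N - 1) / 2\<close> would be a positive
  solution of \<open>v'' + Q v = 0\<close> with \<open>Q = lam + \<bar>u\<bar> powr (p - 1) - m (m - 1) / r\<^sup>2\<close>, and
  \<open>Q \<ge> lam / 2\<close> for large \<open>r\<close>. Sturm comparison with \<open>sin (sqrt (lam / 2) (r - a))\<close> then
  forces a zero of \<open>v\<close>. Only \<open>lam > 0\<close>, \<open>u 0 > 0\<close> and the sign of the nonlinearity enter.\<close>

text \<open>The Wronskian \<open>W = v' s - v s'\<close> of \<open>v\<close> and \<open>s = sin (k (x - a))\<close> satisfies
  \<open>W' = (k\<^sup>2 - Q) v s \<le> 0\<close> while \<open>v > 0\<close>, but \<open>W a = - k v a < 0 < k v (a + pi / k) = W (a + pi / k)\<close>.\<close>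

lemma sturm_comparison_nonpos:
  fixes v v' v'' Q :: "real \<Rightarrow> real" and a k :: real
  assumes k: "k > 0"
    and v_deriv: "\<And>x. x \<in> {a..a + pi / k} \<Longrightarrow> (v has_real_derivative v' x) (at x)"
    and v'_deriv: "\<And>x. x \<in> {a..a + pi / k} \<Longrightarrow> (v' has_real_derivative v'' x) (at x)"
    and ode: "\<And>x. x \<in> {a..a + pi / k} \<Longrightarrow> v'' x + Q x * v x = 0"
    and Q_ge: "\<And>x. x \<in> {a..a + pi / k} \<Longrightarrow> k\<^sup>2 \<le> Q x"
  shows "\<exists>x\<in>{a..a + pi / k}. v x \<le> 0"
proof (rule ccontr)
  assume "\<not> ?thesis"
  then have v_pos: "v x > 0" if "x \<in> {a..a + pi / k}" for x
    using that by (auto simp: not_le)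
  define b where "b = a + pi / k"
  define W where "W x = v' x * sin (k * (x - a)) - k * v x * cos (k * (x - a))" for x
  have "W b \<le> W a"
  proof (rule DERIV_nonpos_imp_nonincreasing[of a b W])
    show "a \<le> b"
      using k by (simp add: b_def)
    fix x assume x: "a \<le> x" "x \<le> b"
    have sin_nonneg: "sin (k * (x - a)) \<ge> 0"
    proof (rule sin_ge_zero)
      show "0 \<le> k * (x - a)"
        using x k by simp
      have "k * (x - a) \<le> k * (pi / k)"
        using x k by (intro mult_left_mono) (auto simp: b_def)
      then show "k * (x - a) \<le> pi"
        using k by simp
    qed
    have "(W has_real_derivative (v'' x + k\<^sup>2 * v x) * sin (k * (x - a))) (at x)"
      unfolding W_def using x
      by (auto intro!: derivative_eq_intros v_deriv v'_deriv simp: b_def algebra_simps power2_eq_square)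
    moreover have "(v'' x + k\<^sup>2 * v x) * sin (k * (x - a)) \<le> 0"
    proof -
      have "v'' x + k\<^sup>2 * v x = (k\<^sup>2 - Q x) * v x"
        using ode[of x] x by (simp add: b_def algebra_simps)
      also have "\<dots> \<le> 0"
        using Q_ge[of x] v_pos[of x] x by (simp add: b_def mult_nonpos_nonneg)
      finally show ?thesis
        using sin_nonneg by (simp add: mult_nonpos_nonneg)
    qed
    ultimately show "\<exists>y. (W has_real_derivative y) (at x) \<and> y \<le> 0"
      by blast
  qed
  moreover have "W a < 0"
    using k v_pos[of a] by (simp add: W_def b_def)
  moreover have "W b > 0"
  proof -
    have "k * (b - a) = pi"
      using k by (simp add: b_def)
    then show ?thesis
      using k v_pos[of b] by (simp add: W_def b_def)
  qed
  ultimately show False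
    by simp
qed

lemma radial_substitution_derivatives:
  fixes u u' u'' :: "real \<Rightarrow> real" and m r :: real
  assumes r: "r > 0"
    and u_deriv: "(u has_real_derivative u' r) (at r)"
    and u'_deriv: "(u' has_real_derivative u'' r) (at r)"
  shows "((\<lambda>x. x powr m * u x) has_real_derivative r powr m * (u' r + m / r * u r)) (at r)"
    and "((\<lambda>x. x powr m * (u' x + m / x * u x)) has_real_derivative
          r powr m * (u'' r + 2 * m / r * u' r + m * (m - 1) / r\<^sup>2 * u r)) (at r)"
  using r
  by (auto intro!: derivative_eq_intros u_deriv u'_deriv
      simp: powr_diff field_simps power2_eq_square)

lemma radial_ode_not_positive:
  fixes u u' u'' q :: "real \<Rightarrow> real" and n lam :: real
  assumes lam: "lam > 0"
    and u_deriv: "\<And>r. r > 0 \<Longrightarrow> (u has_real_derivative u' r) (at r)"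
    and u'_deriv: "\<And>r. r > 0 \<Longrightarrow> (u' has_real_derivative u'' r) (at r)"
    and ode: "\<And>r. r > 0 \<Longrightarrow> u'' r + (n - 1) / r * u' r + q r * u r = 0"
    and q_ge: "\<And>r. r > 0 \<Longrightarrow> lam \<le> q r"
  shows "\<exists>r>0. u r \<le> 0"
proof -
  define m where "m = (n - 1) / 2"
  define k where "k = sqrt (lam / 2)"
  have "\<forall>\<^sub>F r in at_top. m * (m - 1) / r\<^sup>2 \<le> lam / 2"
    using lam by real_asymp
  then obtain a where a: "a \<ge> 1" and far: "\<And>r. r \<ge> a \<Longrightarrow> m * (m - 1) / r\<^sup>2 \<le> lam / 2"
    unfolding eventually_at_top_linorder by (metis max.cobounded1 max.cobounded2 order.trans)
  have "\<exists>x\<in>{a..a + pi / k}. x powr m * u x \<le> 0"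
  proof (rule sturm_comparison_nonpos[where
        v'' = "\<lambda>r. r powr m * (u'' r + 2 * m / r * u' r + m * (m - 1) / r\<^sup>2 * u r)" and
        Q = "\<lambda>r. q r - m * (m - 1) / r\<^sup>2"])
    show "k > 0"
      using lam by (simp add: k_def)
    fix x assume x: "x \<in> {a..a + pi / k}"
    then have "x > 0"
      using a by auto
    then show "((\<lambda>x. x powr m * u x) has_real_derivative x powr m * (u' x + m / x * u x)) (at x)"
      and "((\<lambda>x. x powr m * (u' x + m / x * u x)) has_real_derivative
          x powr m * (u'' x + 2 * m / x * u' x + m * (m - 1) / x\<^sup>2 * u x)) (at x)"
      using radial_substitution_derivatives u_deriv u'_deriv by blast+
    have "2 * m / x = (n - 1) / x"
      using \<open>x > 0\<close> by (simp add: m_def field_simps)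
    have "x powr m * (u'' x + 2 * m / x * u' x + m * (m - 1) / x\<^sup>2 * u x)
        + (q x - m * (m - 1) / x\<^sup>2) * (x powr m * u x)
      = x powr m * (u'' x + 2 * m / x * u' x + q x * u x)" (is "?lhs = _")
      by (simp add: algebra_simps)
    also have "\<dots> = x powr m * (u'' x + (n - 1) / x * u' x + q x * u x)"
      by (simp only: \<open>2 * m / x = (n - 1) / x\<close>)
    also have "\<dots> = 0"
      using ode[OF \<open>x > 0\<close>] by simp
    finally show "?lhs = 0" .
    have "k\<^sup>2 = lam / 2" and "m * (m - 1) / x\<^sup>2 \<le> lam / 2"
      using lam far x by (auto simp: k_def)
    then show "k\<^sup>2 \<le> q x - m * (m - 1) / x\<^sup>2"
      using q_ge[OF \<open>x > 0\<close>] by linarith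
  qed
  then obtain x where "x \<ge> a" "x powr m * u x \<le> 0"
    by auto
  then show ?thesis
    using a by (intro exI[of _ x]) (simp add: mult_le_0_iff)
qed

lemma pos_if_no_positive_zero:
  fixes u :: "real \<Rightarrow> real"
  assumes cont: "continuous_on {0..} u" and pos0: "u 0 > 0"
    and no_zero: "\<And>r. r > 0 \<Longrightarrow> u r \<noteq> 0"
    and r: "r \<ge> 0"
  shows "u r > 0"
proof (rule ccontr)
  assume "\<not> u r > 0"
  then have "u r \<le> 0" "r > 0"
    using pos0 r by (auto simp: less_le)
  moreover have "continuous_on {0..r} u"
    using cont by (rule continuous_on_subset) auto
  ultimately obtain x where "0 \<le> x" "x \<le> r" "u x = 0"
    using IVT2'[of u r 0 0] pos0 by force
  then show False
    using no_zero[of x] pos0 by (cases "x = 0") auto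
qed

theorem proposition3p1:
  fixes N :: nat and p lam \<alpha> :: real and u u' u'' :: "real \<Rightarrow> real"
  assumes N: "N \<ge> 3"
    and p_low: "(real N + 2) / (real N - 2) < p"
    and p_up: "ereal p < p_JL N"
    and lam_pos: "lam > 0"
    and alpha: "\<alpha> > 0"
    and u_deriv: "\<And>r. r \<ge> 0 \<Longrightarrow> (u has_real_derivative u' r) (at r within {0..})"
    and u'_cont: "continuous_on {0..} u'"
    and u'_deriv: "\<And>r. r > 0 \<Longrightarrow> (u' has_real_derivative u'' r) (at r)"
    and ode: "\<And>r. r > 0 \<Longrightarrow>
       u'' r + (real N - 1) / r * u' r + lam * u r + \<bar>u r\<bar> powr (p - 1) * u r = 0"
    and init: "u 0 = \<alpha>" "u' 0 = 0"
  shows "\<exists>r>0. u r = 0"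
proof (rule ccontr)
  assume no_zero: "\<not> (\<exists>r>0. u r = 0)"
  have "continuous_on {0..} u"
    using u_deriv by (meson DERIV_continuous continuous_on_eq_continuous_within atLeast_iff)
  then have u_pos: "u r > 0" if "r \<ge> 0" for r
    using pos_if_no_positive_zero[OF _ _ _ that] no_zero alpha init by blast
  have u_deriv_at: "(u has_real_derivative u' r) (at r)" if "r > 0" for r
    using u_deriv[of r] that by (simp add: at_within_interior[of r "{0..}"])
  have "\<exists>r>0. u r \<le> 0"
  proof (rule radial_ode_not_positive[OF lam_pos u_deriv_at u'_deriv,
        where n = "real N" and q = "\<lambda>r. lam + \<bar>u r\<bar> powr (p - 1)"])
    show "u'' r + (real N - 1) / r * u' r + (lam + \<bar>u r\<bar> powr (p - 1)) * u r = 0"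
      if "r > 0" for r
      using ode[OF that] by (simp add: algebra_simps)
  qed auto
  then obtain r where "r > 0" "u r \<le> 0"
    by blast
  with u_pos[of r] show False
    by simp
qed

end
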